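(* Assume $\inf_{x\in X}\mu(B_x(1/2))>0$. If $T\in\mathscr{E}(X)$ is a controlled operator, $\xi$ is a coarse filter on $X$, and $\lim_{x\to\xi}\|\mathbf{1}_{B_x(1)}T\|=0$, then $T\in\mathscr{J}_\xi(X)$.
   Context: $(X,d)$ is a non-compact proper metric space, $B_x(r)=\{y:d(x,y)\le r\}$, and $\mu$ is a Radon measure with support $X$ such that $\mu(B_x(r))>0$ and $\sup_x\mu(B_x(r))<\infty$ for all $r>0$. On $L^2(X,\mu)$, $\mathbf{1}_A$ is multiplication by the characteristic function of measurable $A$. An operator $T$ is controlled if there is $r>0$ such that $\mathbf{1}_FT\mathbf{1}_G=0$ for all closed $F,G$ with $d(F,G)>r$. A kernel $k$ on $X\times X$ is controlled if $k(x,y)=0$ whenever $d(x,y)>r$ for some $r$; $\mathscr{E}(X)$ is the norm closure of the operators $(Op(k)f)(x)=\int k(x,y)f(y)d\mu(y)$, $k$ bounded, uniformly continuous and controlled. For a filter $\xi$, $\lim_{x\to\xi}f(x)=0$ means $\{x:|f(x)|<\varepsilon\}\in\xi$ for all $\varepsilon>0$. With $F^{(r)}=\{x:\inf_{y\notin F}d(x,y)>r\}$, $\xi$ is coarse if $F\in\xi\Rightarrow F^{(r)}\in\xi$ for all $r>0$. $\mathscr{J}_\xi(X)=\{T\in\mathscr{E}(X):\inf_F\|\mathbf{1}_FT\|=0\}$, infimum over measurable $F\in\xi$. *)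

theory Defs
  imports "HOL-Analysis.Analysis"
begin

definition radon_measure :: "'a::metric_space measure \<Rightarrow> bool" where
  "radon_measure M \<longleftrightarrow>
     sets M = sets borel \<and>
     (\<forall>K. compact K \<longrightarrow> emeasure M K < \<infinity>) \<and>
     (\<forall>A\<in>sets borel. emeasure M A = (INF U\<in>{U. open U \<and> A \<subseteq> U}. emeasure M U)) \<and>
     (\<forall>U. open U \<longrightarrow> emeasure M U = (SUP K\<in>{K. compact K \<and> K \<subseteq> U}. emeasure M K))"

definition full_support :: "'a::metric_space measure \<Rightarrow> bool" where
  "full_support M \<longleftrightarrow> (\<forall>U. open U \<and> U \<noteq> {} \<longrightarrow> emeasure M U > 0)"

text \<open>Elements of L^2 are represented by square integrable measurable functions;
  functions agreeing almost everywhere represent the same element.\<close>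
definition L2 :: "'a measure \<Rightarrow> ('a \<Rightarrow> complex) set" where
  "L2 M = {f. f \<in> borel_measurable M \<and> integrable M (\<lambda>x. (cmod (f x))\<^sup>2)}"

definition L2norm :: "'a measure \<Rightarrow> ('a \<Rightarrow> complex) \<Rightarrow> real" where
  "L2norm M f = sqrt (\<integral>x. (cmod (f x))\<^sup>2 \<partial>M)"

definition bounded_op :: "'a measure \<Rightarrow> (('a \<Rightarrow> complex) \<Rightarrow> ('a \<Rightarrow> complex)) \<Rightarrow> bool" where
  "bounded_op M T \<longleftrightarrow>
     (\<forall>f\<in>L2 M. T f \<in> L2 M) \<and>
     (\<forall>f\<in>L2 M. \<forall>g\<in>L2 M. AE x in M. T (\<lambda>y. f y + g y) x = T f x + T g x) \<and>
     (\<forall>f\<in>L2 M. \<forall>c. AE x in M. T (\<lambda>y. c * f y) x = c * T f x) \<and>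
     (\<forall>f\<in>L2 M. \<forall>g\<in>L2 M. (AE x in M. f x = g x) \<longrightarrow> (AE x in M. T f x = T g x)) \<and>
     (\<exists>C. \<forall>f\<in>L2 M. L2norm M (T f) \<le> C * L2norm M f)"

definition opnorm :: "'a measure \<Rightarrow> (('a \<Rightarrow> complex) \<Rightarrow> ('a \<Rightarrow> complex)) \<Rightarrow> real" where
  "opnorm M T = (SUP f\<in>{f\<in>L2 M. L2norm M f \<le> 1}. L2norm M (T f))"

definition ind_op :: "'a set \<Rightarrow> ('a \<Rightarrow> complex) \<Rightarrow> ('a \<Rightarrow> complex)" where
  "ind_op A f = (\<lambda>x. indicator A x * f x)"

definition controlled_op ::
  "'a::metric_space measure \<Rightarrow> (('a \<Rightarrow> complex) \<Rightarrow> ('a \<Rightarrow> complex)) \<Rightarrow> bool" where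
  "controlled_op M T \<longleftrightarrow>
     (\<exists>r>0. \<forall>F G. closed F \<and> closed G \<and> setdist F G > r \<longrightarrow>
        (\<forall>f\<in>L2 M. AE x in M. ind_op F (T (ind_op G f)) x = 0))"

definition controlled_kernel :: "('a::metric_space \<Rightarrow> 'a \<Rightarrow> complex) \<Rightarrow> bool" where
  "controlled_kernel k \<longleftrightarrow> (\<exists>r. \<forall>x y. dist x y > r \<longrightarrow> k x y = 0)"

definition good_kernel :: "('a::metric_space \<Rightarrow> 'a \<Rightarrow> complex) \<Rightarrow> bool" where
  "good_kernel k \<longleftrightarrow>
     (\<exists>B. \<forall>x y. cmod (k x y) \<le> B) \<and>
     uniformly_continuous_on UNIV (\<lambda>(x, y). k x y) \<and>
     controlled_kernel k"

definition Op :: "'a measure \<Rightarrow> ('a \<Rightarrow> 'a \<Rightarrow> complex) \<Rightarrow> ('a \<Rightarrow> complex) \<Rightarrow> ('a \<Rightarrow> complex)" where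
  "Op M k f = (\<lambda>x. \<integral>y. k x y * f y \<partial>M)"

definition E_alg ::
  "'a::metric_space measure \<Rightarrow> (('a \<Rightarrow> complex) \<Rightarrow> ('a \<Rightarrow> complex)) set" where
  "E_alg M = {T. bounded_op M T \<and>
     (\<forall>\<epsilon>>0. \<exists>k. good_kernel k \<and> opnorm M (\<lambda>f x. T f x - Op M k f x) < \<epsilon>)}"

text \<open>F^(r) = {x. inf_{y not in F} d(x,y) > r}, with inf of the empty set = +infinity.\<close>
definition inner_r :: "'a::metric_space set \<Rightarrow> real \<Rightarrow> 'a set" where
  "inner_r F r = {x. \<exists>s>r. \<forall>y. y \<notin> F \<longrightarrow> s \<le> dist x y}"

definition coarse_filter :: "'a::metric_space filter \<Rightarrow> bool" where
  "coarse_filter \<xi> \<longleftrightarrow>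
     (\<forall>F r. r > 0 \<longrightarrow> eventually (\<lambda>x. x \<in> F) \<xi> \<longrightarrow> eventually (\<lambda>x. x \<in> inner_r F r) \<xi>)"

definition J_ideal ::
  "'a::metric_space measure \<Rightarrow> 'a filter \<Rightarrow> (('a \<Rightarrow> complex) \<Rightarrow> ('a \<Rightarrow> complex)) set" where
  "J_ideal M \<xi> = {T. T \<in> E_alg M \<and>
     (INF F\<in>{F. F \<in> sets M \<and> eventually (\<lambda>x. x \<in> F) \<xi>}. opnorm M (\<lambda>f. ind_op F (T f))) = 0}"

end

theory Submission
  imports Defs
begin

text \<open>Given \<epsilon> > 0, the set A of points x with \<parallel>1_{B_x(1)} T\<parallel> < \<epsilon> belongs to \<xi>. Choose a
  maximal 1-separated subset S \<subseteq> A; then F = \<Union>_{s \<in> S} B_s(1) contains A, so F \<in> \<xi>. If T has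
  propagation r, then 1_{B_s(1)} T = 1_{B_s(1)} T 1_{B_s(R)} for R = r + 2, hence
  \<parallel>1_F T g\<parallel>^2 \<le> \<Sum>_s \<parallel>1_{B_s(1)} T g\<parallel>^2 \<le> \<epsilon>^2 \<Sum>_s \<parallel>1_{B_s(R)} g\<parallel>^2 \<le> \<epsilon>^2 K \<parallel>g\<parallel>^2,
  where K bounds the number of points of S in any ball of radius R. Such a K exists by packing:
  the disjoint balls B_p(1/2), p \<in> S \<inter> B_y(R), each of measure at least inf_x \<mu>(B_x(1/2)) > 0,
  lie in B_y(R + 1/2), whose measure is bounded uniformly in y. Thus \<parallel>1_F T\<parallel> \<le> \<epsilon> \<surd>K.\<close>

lemma L2_borel_measurable: "f \<in> L2 M \<Longrightarrow> f \<in> borel_measurable M"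
  by (simp add: L2_def)

lemma L2_ind_op:
  assumes "f \<in> L2 M" "A \<in> sets M"
  shows "ind_op A f \<in> L2 M"
proof -
  have "(cmod (indicator A x * f x))\<^sup>2 = indicator A x *\<^sub>R (cmod (f x))\<^sup>2" for x
    by (simp add: indicator_def)
  moreover have "integrable M (\<lambda>x. indicator A x *\<^sub>R (cmod (f x))\<^sup>2)"
    using assms by (intro integrable_mult_indicator) (auto simp: L2_def)
  ultimately show ?thesis
    using assms by (auto simp: L2_def ind_op_def)
qed

lemma L2norm_nonneg: "0 \<le> L2norm M f"
  by (simp add: L2norm_def)

lemma L2norm_ind_op_le:
  assumes "f \<in> L2 M" "A \<in> sets M"
  shows "L2norm M (ind_op A f) \<le> L2norm M f"
  unfolding L2norm_def
  using assms L2_ind_op[OF assms]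
  by (intro real_sqrt_le_mono integral_mono) (auto simp: L2_def ind_op_def indicator_def)

lemma L2_scale: "f \<in> L2 M \<Longrightarrow> (\<lambda>x. c * f x) \<in> L2 M"
  by (auto simp: L2_def norm_mult power_mult_distrib)

lemma L2norm_scale: "L2norm M (\<lambda>x. c * f x) = cmod c * L2norm M f"
  by (simp add: L2norm_def norm_mult power_mult_distrib real_sqrt_mult)

lemma L2norm_cong_AE:
  assumes "f \<in> L2 M" "g \<in> L2 M" "AE x in M. f x = g x"
  shows "L2norm M f = L2norm M g"
proof -
  have [measurable]: "f \<in> borel_measurable M" "g \<in> borel_measurable M"
    using assms by (auto intro: L2_borel_measurable)
  have "(\<integral>x. (cmod (f x))\<^sup>2 \<partial>M) = (\<integral>x. (cmod (g x))\<^sup>2 \<partial>M)"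
    by (rule integral_cong_AE) (use assms(3) in auto)
  then show ?thesis by (simp add: L2norm_def)
qed

lemma L2norm_sq_eq_nn_integral:
  assumes "f \<in> L2 M"
  shows "ennreal ((L2norm M f)\<^sup>2) = (\<integral>\<^sup>+x. ennreal ((cmod (f x))\<^sup>2) \<partial>M)"
  using assms by (simp add: L2norm_def L2_def nn_integral_eq_integral)

lemma L2norm_ind_op_sq_eq_nn_integral:
  assumes "f \<in> L2 M" "A \<in> sets M"
  shows "ennreal ((L2norm M (ind_op A f))\<^sup>2) = (\<integral>\<^sup>+x. indicator A x * ennreal ((cmod (f x))\<^sup>2) \<partial>M)"
  unfolding L2norm_sq_eq_nn_integral[OF L2_ind_op[OF assms]]
  by (intro nn_integral_cong) (simp add: ind_op_def indicator_def)

lemma L2_zero: "(\<lambda>x. 0) \<in> L2 M"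
  by (simp add: L2_def)

lemma L2norm_zero: "L2norm M (\<lambda>x. 0) = 0"
  by (simp add: L2norm_def)

lemma bounded_op_L2: "bounded_op M T \<Longrightarrow> f \<in> L2 M \<Longrightarrow> T f \<in> L2 M"
  by (simp add: bounded_op_def)

lemma bounded_op_scale:
  "bounded_op M T \<Longrightarrow> f \<in> L2 M \<Longrightarrow> AE x in M. T (\<lambda>y. c * f y) x = c * T f x"
  by (simp add: bounded_op_def)

lemma bdd_above_opnorm_ind_op:
  assumes T: "bounded_op M T" and A: "A \<in> sets M"
  shows "bdd_above ((\<lambda>f. L2norm M (ind_op A (T f))) ` {f\<in>L2 M. L2norm M f \<le> 1})"
proof -
  obtain C where C: "\<And>f. f \<in> L2 M \<Longrightarrow> L2norm M (T f) \<le> C * L2norm M f"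
    using T unfolding bounded_op_def by blast
  show ?thesis
  proof (rule bdd_aboveI2)
    fix f assume f: "f \<in> {f\<in>L2 M. L2norm M f \<le> 1}"
    have "L2norm M (ind_op A (T f)) \<le> L2norm M (T f)"
      using f by (intro L2norm_ind_op_le bounded_op_L2[OF T] A) simp
    also have "\<dots> \<le> C * L2norm M f" using C f by simp
    also have "\<dots> \<le> \<bar>C\<bar> * L2norm M f" by (simp add: L2norm_nonneg mult_right_mono)
    also have "\<dots> \<le> \<bar>C\<bar>" using f by (simp add: mult_left_le)
    finally show "L2norm M (ind_op A (T f)) \<le> \<bar>C\<bar>" .
  qed
qed

lemma L2norm_ind_op_le_opnorm:
  assumes "bounded_op M T" "A \<in> sets M" "f \<in> L2 M" "L2norm M f \<le> 1"
  shows "L2norm M (ind_op A (T f)) \<le> opnorm M (\<lambda>f. ind_op A (T f))"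
  unfolding opnorm_def
  by (rule cSUP_upper[OF _ bdd_above_opnorm_ind_op]) (use assms in auto)

lemma opnorm_ind_op_nonneg:
  assumes "bounded_op M T" "A \<in> sets M"
  shows "0 \<le> opnorm M (\<lambda>f. ind_op A (T f))"
proof -
  have "L2norm M (ind_op A (T (\<lambda>x. 0))) \<le> opnorm M (\<lambda>f. ind_op A (T f))"
    by (rule L2norm_ind_op_le_opnorm[OF assms L2_zero]) (simp add: L2norm_zero)
  then show ?thesis using L2norm_nonneg order_trans by blast
qed

lemma opnorm_ind_op_le:
  assumes "\<And>f. f \<in> L2 M \<Longrightarrow> L2norm M f \<le> 1 \<Longrightarrow> L2norm M (ind_op A (T f)) \<le> b"
  shows "opnorm M (\<lambda>f. ind_op A (T f)) \<le> b"
proof -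
  have "(\<lambda>x. 0) \<in> {f\<in>L2 M. L2norm M f \<le> 1}" by (simp add: L2_zero L2norm_zero)
  then show ?thesis unfolding opnorm_def by (intro cSUP_least) (auto intro: assms)
qed

lemma L2norm_ind_op_le_opnorm_mult:
  assumes T: "bounded_op M T" and A: "A \<in> sets M" and f: "f \<in> L2 M"
  shows "L2norm M (ind_op A (T f)) \<le> opnorm M (\<lambda>f. ind_op A (T f)) * L2norm M f"
proof (cases "L2norm M f = 0")
  case True
  obtain C where "L2norm M (T f) \<le> C * L2norm M f"
    using T f unfolding bounded_op_def by blast
  then show ?thesis
    using True L2norm_ind_op_le[OF bounded_op_L2[OF T f] A] L2norm_nonneg[of M "ind_op A (T f)"] by simp
next
  case False
  then have pos: "0 < L2norm M f" using L2norm_nonneg[of M f] by simp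
  define c where "c = complex_of_real (1 / L2norm M f)"
  define h where "h = (\<lambda>x. c * f x)"
  have c: "cmod c = 1 / L2norm M f" using pos by (simp add: c_def norm_divide)
  have h_L2: "h \<in> L2 M" unfolding h_def by (rule L2_scale[OF f])
  have h_norm: "L2norm M h = 1" unfolding h_def L2norm_scale c using pos by simp
  have "AE x in M. T h x = c * T f x"
    unfolding h_def by (rule bounded_op_scale[OF T f])
  then have "AE x in M. ind_op A (T h) x = c * ind_op A (T f) x"
    by (rule eventually_mono) (simp add: ind_op_def)
  then have "L2norm M (ind_op A (T h)) = L2norm M (\<lambda>x. c * ind_op A (T f) x)"
    using A by (intro L2norm_cong_AE L2_ind_op L2_scale bounded_op_L2[OF T h_L2] bounded_op_L2[OF T f])
  then have "L2norm M (ind_op A (T f)) / L2norm M f = L2norm M (ind_op A (T h))"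
    unfolding L2norm_scale c by simp
  also have "\<dots> \<le> opnorm M (\<lambda>f. ind_op A (T f))"
    using L2norm_ind_op_le_opnorm[OF T A h_L2] h_norm by simp
  finally show ?thesis unfolding pos_divide_le_eq[OF pos] .
qed

section \<open>Locality of operators of finite propagation\<close>

lemma ind_op_cball_T_local:
  assumes T: "bounded_op M T" and sM: "sets M = sets borel"
    and propagation: "\<forall>F G. closed F \<and> closed G \<and> setdist F G > r \<longrightarrow>
        (\<forall>f\<in>L2 M. AE x in M. ind_op F (T (ind_op G f)) x = 0)"
    and g: "g \<in> L2 M" and R: "r + 1 < R"
  shows "AE x in M. ind_op (cball s 1) (T g) x = ind_op (cball s 1) (T (ind_op (ball s R) g)) x"
proof (cases "ball s R = UNIV")
  case True
  then show ?thesis by (simp add: ind_op_def)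
next
  case False
  define G where "G = - ball s R"
  have "R - 1 \<le> setdist (cball s 1) G"
  proof (rule le_setdistI)
    show "cball s 1 \<noteq> {}" "G \<noteq> {}" using False by (auto simp: G_def)
    show "R - 1 \<le> dist x y" if "x \<in> cball s 1" "y \<in> G" for x y
      using that dist_triangle[of s y x] by (simp add: G_def)
  qed
  then have "r < setdist (cball s 1) G" using R by linarith
  then have far: "AE x in M. ind_op (cball s 1) (T (ind_op G g)) x = 0"
    using propagation[rule_format, of "cball s 1" G g] g by (simp add: G_def closed_Compl)
  define g_near g_far where "g_near = ind_op (ball s R) g" and "g_far = ind_op G g"
  have L2_parts: "g_near \<in> L2 M" "g_far \<in> L2 M"
    unfolding g_near_def g_far_def by (intro L2_ind_op g; simp add: sM G_def)+
  have "(\<lambda>y. g_near y + g_far y) = g"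
    by (auto simp: g_near_def g_far_def ind_op_def G_def indicator_def)
  moreover have "AE x in M. T (\<lambda>y. g_near y + g_far y) x = T g_near x + T g_far x"
    using T L2_parts unfolding bounded_op_def by blast
  ultimately have "AE x in M. T g x = T g_near x + T g_far x" by simp
  with far show ?thesis
    unfolding g_near_def g_far_def by eventually_elim (simp add: ind_op_def distrib_left)
qed

lemma L2norm_ind_op_cball_T_le:
  assumes T: "bounded_op M T" and sM: "sets M = sets borel"
    and propagation: "\<forall>F G. closed F \<and> closed G \<and> setdist F G > r \<longrightarrow>
        (\<forall>f\<in>L2 M. AE x in M. ind_op F (T (ind_op G f)) x = 0)"
    and g: "g \<in> L2 M" and R: "r + 1 < R"
  shows "L2norm M (ind_op (cball s 1) (T g))
    \<le> opnorm M (\<lambda>f. ind_op (cball s 1) (T f)) * L2norm M (ind_op (ball s R) g)"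
proof -
  have meas: "cball s 1 \<in> sets M" "ball s R \<in> sets M" by (simp_all add: sM)
  have "L2norm M (ind_op (cball s 1) (T g)) = L2norm M (ind_op (cball s 1) (T (ind_op (ball s R) g)))"
    using ind_op_cball_T_local[OF T sM propagation g R]
    by (intro L2norm_cong_AE L2_ind_op bounded_op_L2[OF T] g meas)
  also have "\<dots> \<le> opnorm M (\<lambda>f. ind_op (cball s 1) (T f)) * L2norm M (ind_op (ball s R) g)"
    by (intro L2norm_ind_op_le_opnorm_mult T meas L2_ind_op g)
  finally show ?thesis .
qed

section \<open>Separated sets\<close>

lemma maximal_separated_subset:
  fixes A :: "'a::metric_space set"
  assumes "0 \<le> \<delta>"
  obtains S where "S \<subseteq> A" "pairwise (\<lambda>p q. \<delta> < dist p q) S" "A \<subseteq> (\<Union>s\<in>S. cball s \<delta>)"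
proof -
  define \<F> where "\<F> = {S. S \<subseteq> A \<and> pairwise (\<lambda>p q. \<delta> < dist p q) S}"
  have "\<Union>\<C> \<in> \<F>" if "\<C> \<in> chains \<F>" for \<C>
    using that unfolding \<F>_def chains_def by (auto intro: pairwise_chain_Union)
  then obtain S where S: "S \<in> \<F>" and maximal: "\<And>X. X \<in> \<F> \<Longrightarrow> S \<subseteq> X \<Longrightarrow> X = S"
    using Zorn_Lemma[of \<F>] by blast
  have "\<exists>s\<in>S. dist s a \<le> \<delta>" if a: "a \<in> A" for a
  proof (rule ccontr)
    assume "\<not> (\<exists>s\<in>S. dist s a \<le> \<delta>)"
    then have far: "\<forall>s\<in>S. \<delta> < dist s a" by auto
    then have "insert a S \<in> \<F>"
      using S a by (auto simp: \<F>_def pairwise_insert dist_commute)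
    then have "a \<in> S" using maximal by blast
    then show False using far assms by auto
  qed
  then have "A \<subseteq> (\<Union>s\<in>S. cball s \<delta>)" by auto
  then show ?thesis using S that unfolding \<F>_def by blast
qed

lemma card_mult_le_emeasure_cball:
  fixes M :: "'a::metric_space measure"
  assumes sM: "sets M = sets borel"
    and c: "\<And>x. c \<le> emeasure M (cball x \<rho>)"
    and P: "finite P" "pairwise (\<lambda>p q. 2 * \<rho> < dist p q) P" "P \<subseteq> ball y R"
  shows "of_nat (card P) * c \<le> emeasure M (cball y (R + \<rho>))"
proof -
  have "of_nat (card P) * c = (\<Sum>p\<in>P. c)" by simp
  also have "\<dots> \<le> (\<Sum>p\<in>P. emeasure M (cball p \<rho>))" by (intro sum_mono c)
  also have "\<dots> = emeasure M (\<Union>p\<in>P. cball p \<rho>)"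
  proof (rule sum_emeasure)
    show "disjoint_family_on (\<lambda>p. cball p \<rho>) P"
      unfolding disjoint_family_on_def
    proof (intro ballI impI)
      fix p q assume "p \<in> P" "q \<in> P" "p \<noteq> q"
      then have "2 * \<rho> < dist p q" using P(2) by (auto dest: pairwiseD)
      show "cball p \<rho> \<inter> cball q \<rho> = {}"
      proof (intro equals0I)
        fix z assume "z \<in> cball p \<rho> \<inter> cball q \<rho>"
        then show False
          using \<open>2 * \<rho> < dist p q\<close> dist_triangle[of p q z] by (simp add: dist_commute)
      qed
    qed
    show "(\<lambda>p. cball p \<rho>) ` P \<subseteq> sets M" by (auto simp: sM)
  qed fact
  also have "\<dots> \<le> emeasure M (cball y (R + \<rho>))"
  proof (rule emeasure_mono)
    show "(\<Union>p\<in>P. cball p \<rho>) \<subseteq> cball y (R + \<rho>)"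
    proof clarify
      fix p z assume "p \<in> P" "z \<in> cball p \<rho>"
      then show "z \<in> cball y (R + \<rho>)"
        using P(3) dist_triangle[of y z p] by force
    qed
  qed (simp add: sM)
  finally show ?thesis .
qed

lemma separated_Int_ball_card_le:
  fixes M :: "'a::metric_space measure"
  assumes sM: "sets M = sets borel"
    and inf_pos: "0 < (INF x. emeasure M (cball x (1/2)))"
    and sup_fin: "(SUP x. emeasure M (cball x (R + 1/2))) < \<infinity>"
  obtains K where "\<And>(S :: 'a set) y. pairwise (\<lambda>p q. 1 < dist p q) S \<Longrightarrow>
    finite (S \<inter> ball y R) \<and> real (card (S \<inter> ball y R)) \<le> K"
proof -
  obtain z :: ennreal where z: "0 < z" "z < (INF x. emeasure M (cball x (1/2)))"
    using dense[OF inf_pos] by blast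
  then obtain c where c: "0 < c" "ennreal c < (INF x. emeasure M (cball x (1/2)))"
    by (cases z rule: ennreal_cases) auto
  obtain U where U: "(SUP x. emeasure M (cball x (R + 1/2))) = ennreal U" "0 \<le> U"
    using sup_fin by (cases "SUP x. emeasure M (cball x (R + 1/2))" rule: ennreal_cases) auto
  have card_le: "real (card P) \<le> U / c"
    if "finite P" "pairwise (\<lambda>p q. 1 < dist p q) P" "P \<subseteq> ball y R" for P and y :: 'a
  proof -
    have "of_nat (card P) * ennreal c \<le> emeasure M (cball y (R + 1/2))"
      using that c(2) by (intro card_mult_le_emeasure_cball[OF sM])
        (auto intro: order_trans[OF less_imp_le INF_lower])
    also have "\<dots> \<le> ennreal U" unfolding U(1)[symmetric] by (rule SUP_upper) simp
    finally have "real (card P) * c \<le> U"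
      using c(1) U(2) by (simp add: ennreal_of_nat_eq_real_of_nat ennreal_mult''[symmetric])
    then show ?thesis using c(1) by (simp add: le_divide_eq)
  qed
  have "finite (S \<inter> ball y R) \<and> real (card (S \<inter> ball y R)) \<le> U / c"
    if S: "pairwise (\<lambda>p q. 1 < dist p q) S" for S :: "'a set" and y
  proof
    have sub: "pairwise (\<lambda>p q. 1 < dist p q) P" if "P \<subseteq> S" for P
      using S that by (rule pairwise_subset)
    show fin: "finite (S \<inter> ball y R)"
    proof (rule ccontr)
      assume "infinite (S \<inter> ball y R)"
      then obtain P where P: "finite P" "card P = nat \<lceil>U / c\<rceil> + 1" "P \<subseteq> S \<inter> ball y R"
        using infinite_arbitrarily_large by blast
      then have "real (card P) \<le> U / c" using sub by (intro card_le) auto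
      with P(2) show False by linarith
    qed
    show "real (card (S \<inter> ball y R)) \<le> U / c"
      using fin sub by (intro card_le) auto
  qed
  then show ?thesis by (rule that)
qed

lemma countable_if_finite_Int_ball:
  fixes S :: "'a::metric_space set"
  assumes "\<And>n::nat. finite (S \<inter> ball y (real n))"
  shows "countable S"
proof -
  have "S \<subseteq> (\<Union>n. S \<inter> ball y (real n))"
  proof
    fix s assume "s \<in> S"
    moreover obtain n :: nat where "dist y s < real n" using reals_Archimedean2 by blast
    ultimately show "s \<in> (\<Union>n. S \<inter> ball y (real n))" by auto
  qed
  moreover have "countable (\<Union>n. S \<inter> ball y (real n))"
    by (rule countable_UN) (auto intro: countable_finite assms)
  ultimately show ?thesis by (rule countable_subset)
qed

lemma countable_separated:
  fixes M :: "'a::metric_space measure" and S :: "'a set"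
  assumes sM: "sets M = sets borel"
    and inf_pos: "0 < (INF x. emeasure M (cball x (1/2)))"
    and sup_fin: "\<And>\<rho>. 0 < \<rho> \<Longrightarrow> (SUP x. emeasure M (cball x \<rho>)) < \<infinity>"
    and separated: "pairwise (\<lambda>p q. 1 < dist p q) S"
  shows "countable S"
proof (rule countable_if_finite_Int_ball)
  fix n :: nat
  have "(SUP x. emeasure M (cball x (real n + 1/2))) < \<infinity>" using sup_fin by simp
  then obtain K where "\<And>(S :: 'a set) y. pairwise (\<lambda>p q. 1 < dist p q) S \<Longrightarrow>
      finite (S \<inter> ball y (real n)) \<and> real (card (S \<inter> ball y (real n))) \<le> K"
    using separated_Int_ball_card_le[OF sM inf_pos] by blast
  then show "finite (S \<inter> ball undefined (real n))" using separated by blast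
qed

section \<open>Summing local estimates\<close>

lemma nn_integral_count_space_indicator_mult:
  fixes q :: "'a \<Rightarrow> ennreal"
  assumes S: "countable S" and B: "\<And>s. s \<in> S \<Longrightarrow> B s \<in> sets M"
    and q: "q \<in> borel_measurable M"
  shows "(\<integral>\<^sup>+s. (\<integral>\<^sup>+x. indicator (B s) x * q x \<partial>M) \<partial>count_space S)
    = (\<integral>\<^sup>+x. emeasure (count_space S) {s\<in>S. x \<in> B s} * q x \<partial>M)"
proof -
  have count: "(\<integral>\<^sup>+s. indicator (B s) x \<partial>count_space S) = emeasure (count_space S) {s\<in>S. x \<in> B s}"
    for x
  proof -
    have "(\<integral>\<^sup>+s. indicator (B s) x \<partial>count_space S) = (\<integral>\<^sup>+s. indicator {s. x \<in> B s} s \<partial>count_space S)"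
      by (intro nn_integral_cong) (simp add: indicator_def)
    also have "\<dots> = emeasure (count_space S) {s\<in>S. x \<in> B s}"
      by (subst nn_integral_indicator') (auto intro: arg_cong[where f = "emeasure _"])
    finally show ?thesis .
  qed
  have "(\<integral>\<^sup>+s. (\<integral>\<^sup>+x. indicator (B s) x * q x \<partial>M) \<partial>count_space S)
      = (\<integral>\<^sup>+x. (\<integral>\<^sup>+s. indicator (B s) x * q x \<partial>count_space S) \<partial>M)"
  proof (intro nn_integral_count_space_nn_integral[symmetric] S)
    fix s assume "s \<in> S"
    then have [measurable]: "B s \<in> sets M" by (rule B)
    show "(\<lambda>x. indicator (B s) x * q x) \<in> borel_measurable M" using q by measurable
  qed
  also have "\<dots> = (\<integral>\<^sup>+x. (\<integral>\<^sup>+s. indicator (B s) x \<partial>count_space S) * q x \<partial>M)"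
    by (intro nn_integral_cong nn_integral_multc) simp
  finally show ?thesis unfolding count .
qed

lemma L2norm_ind_op_UN_sq_le:
  assumes S: "countable S" and B: "\<And>s. s \<in> S \<Longrightarrow> B s \<in> sets M" and f: "f \<in> L2 M"
  shows "ennreal ((L2norm M (ind_op (\<Union>s\<in>S. B s) f))\<^sup>2)
    \<le> (\<integral>\<^sup>+s. ennreal ((L2norm M (ind_op (B s) f))\<^sup>2) \<partial>count_space S)"
proof -
  define q where "q x = ennreal ((cmod (f x))\<^sup>2)" for x
  have [measurable]: "f \<in> borel_measurable M" using f by (rule L2_borel_measurable)
  have q: "q \<in> borel_measurable M" unfolding q_def by measurable
  have overlap: "indicator (\<Union>s\<in>S. B s) x \<le> emeasure (count_space S) {s\<in>S. x \<in> B s}" for x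
  proof (cases "x \<in> (\<Union>s\<in>S. B s)")
    case True
    then have "{s\<in>S. x \<in> B s} \<noteq> {}" by auto
    then show ?thesis
      using True by (subst emeasure_count_space) (auto simp: Suc_le_eq card_gt_0_iff)
  qed simp
  have "(\<Union>s\<in>S. B s) \<in> sets M" using B by (intro sets.countable_UN'[OF S]) auto
  then have "ennreal ((L2norm M (ind_op (\<Union>s\<in>S. B s) f))\<^sup>2)
      = (\<integral>\<^sup>+x. indicator (\<Union>s\<in>S. B s) x * q x \<partial>M)"
    unfolding q_def by (rule L2norm_ind_op_sq_eq_nn_integral[OF f])
  also have "\<dots> \<le> (\<integral>\<^sup>+x. emeasure (count_space S) {s\<in>S. x \<in> B s} * q x \<partial>M)"
    by (intro nn_integral_mono mult_right_mono) (simp_all add: overlap)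
  also have "\<dots> = (\<integral>\<^sup>+s. (\<integral>\<^sup>+x. indicator (B s) x * q x \<partial>M) \<partial>count_space S)"
    by (rule nn_integral_count_space_indicator_mult[symmetric, OF S B q])
  also have "\<dots> = (\<integral>\<^sup>+s. ennreal ((L2norm M (ind_op (B s) f))\<^sup>2) \<partial>count_space S)"
    unfolding q_def using B
    by (intro nn_integral_cong L2norm_ind_op_sq_eq_nn_integral[OF f, symmetric]) simp
  finally show ?thesis .
qed

lemma nn_integral_L2norm_ind_op_sq_le:
  assumes S: "countable S" and B: "\<And>s. s \<in> S \<Longrightarrow> B s \<in> sets M" and f: "f \<in> L2 M"
    and multiplicity: "\<And>x. emeasure (count_space S) {s\<in>S. x \<in> B s} \<le> K"
  shows "(\<integral>\<^sup>+s. ennreal ((L2norm M (ind_op (B s) f))\<^sup>2) \<partial>count_space S) \<le> K * ennreal ((L2norm M f)\<^sup>2)"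
proof -
  define p where "p x = ennreal ((cmod (f x))\<^sup>2)" for x
  have [measurable]: "f \<in> borel_measurable M" using f by (rule L2_borel_measurable)
  have p: "p \<in> borel_measurable M" unfolding p_def by measurable
  have "(\<integral>\<^sup>+s. ennreal ((L2norm M (ind_op (B s) f))\<^sup>2) \<partial>count_space S)
      = (\<integral>\<^sup>+s. (\<integral>\<^sup>+x. indicator (B s) x * p x \<partial>M) \<partial>count_space S)"
    unfolding p_def using B f by (intro nn_integral_cong L2norm_ind_op_sq_eq_nn_integral) auto
  also have "\<dots> = (\<integral>\<^sup>+x. emeasure (count_space S) {s\<in>S. x \<in> B s} * p x \<partial>M)"
    by (rule nn_integral_count_space_indicator_mult[OF S B p])
  also have "\<dots> \<le> (\<integral>\<^sup>+x. K * p x \<partial>M)"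
    by (intro nn_integral_mono mult_right_mono multiplicity) simp
  also have "\<dots> = K * (\<integral>\<^sup>+x. p x \<partial>M)"
    by (rule nn_integral_cmult[OF p])
  also have "(\<integral>\<^sup>+x. p x \<partial>M) = ennreal ((L2norm M f)\<^sup>2)"
    unfolding p_def by (rule L2norm_sq_eq_nn_integral[OF f, symmetric])
  finally show ?thesis .
qed

lemma L2norm_ind_op_UN_cball_T_le:
  fixes M :: "'a::metric_space measure"
  assumes T: "bounded_op M T" and sM: "sets M = sets borel"
    and propagation: "\<forall>F G. closed F \<and> closed G \<and> setdist F G > r \<longrightarrow>
        (\<forall>f\<in>L2 M. AE x in M. ind_op F (T (ind_op G f)) x = 0)"
    and R: "r + 1 < R" and S: "countable S"
    and multiplicity: "\<And>x. finite (S \<inter> ball x R) \<and> real (card (S \<inter> ball x R)) \<le> K"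
    and small: "\<And>s. s \<in> S \<Longrightarrow> opnorm M (\<lambda>f. ind_op (cball s 1) (T f)) \<le> \<epsilon>"
    and \<epsilon>: "0 \<le> \<epsilon>" and g: "g \<in> L2 M"
  shows "L2norm M (ind_op (\<Union>s\<in>S. cball s 1) (T g)) \<le> \<epsilon> * sqrt K * L2norm M g"
proof -
  have K: "0 \<le> K" using multiplicity[of undefined] by linarith
  have local: "ennreal ((L2norm M (ind_op (cball s 1) (T g)))\<^sup>2)
      \<le> ennreal (\<epsilon>\<^sup>2) * ennreal ((L2norm M (ind_op (ball s R) g))\<^sup>2)" if "s \<in> S" for s
  proof -
    have "L2norm M (ind_op (cball s 1) (T g))
        \<le> opnorm M (\<lambda>f. ind_op (cball s 1) (T f)) * L2norm M (ind_op (ball s R) g)"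
      by (rule L2norm_ind_op_cball_T_le[OF T sM propagation g R])
    also have "\<dots> \<le> \<epsilon> * L2norm M (ind_op (ball s R) g)"
      by (rule mult_right_mono[OF small[OF that] L2norm_nonneg])
    finally have "(L2norm M (ind_op (cball s 1) (T g)))\<^sup>2 \<le> (\<epsilon> * L2norm M (ind_op (ball s R) g))\<^sup>2"
      by (rule power_mono[OF _ L2norm_nonneg])
    then show ?thesis
      by (simp add: ennreal_mult''[symmetric] power_mult_distrib)
  qed
  have overlap: "emeasure (count_space S) {s\<in>S. x \<in> ball s R} \<le> ennreal K" for x
  proof -
    have "{s\<in>S. x \<in> ball s R} = S \<inter> ball x R" by (auto simp: dist_commute)
    then show ?thesis
      using multiplicity[of x] by (simp add: ennreal_of_nat_eq_real_of_nat ennreal_leI)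
  qed
  have "ennreal ((L2norm M (ind_op (\<Union>s\<in>S. cball s 1) (T g)))\<^sup>2)
      \<le> (\<integral>\<^sup>+s. ennreal ((L2norm M (ind_op (cball s 1) (T g)))\<^sup>2) \<partial>count_space S)"
    by (rule L2norm_ind_op_UN_sq_le[OF S _ bounded_op_L2[OF T g]]) (simp add: sM)
  also have "\<dots> \<le> (\<integral>\<^sup>+s. ennreal (\<epsilon>\<^sup>2) * ennreal ((L2norm M (ind_op (ball s R) g))\<^sup>2) \<partial>count_space S)"
    by (intro nn_integral_mono local) simp
  also have "\<dots> = ennreal (\<epsilon>\<^sup>2) * (\<integral>\<^sup>+s. ennreal ((L2norm M (ind_op (ball s R) g))\<^sup>2) \<partial>count_space S)"
    by (simp add: nn_integral_cmult)
  also have "\<dots> \<le> ennreal (\<epsilon>\<^sup>2) * (ennreal K * ennreal ((L2norm M g)\<^sup>2))"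
    by (intro mult_left_mono nn_integral_L2norm_ind_op_sq_le[OF S _ g overlap]) (simp_all add: sM)
  also have "\<dots> = ennreal ((\<epsilon> * sqrt K * L2norm M g)\<^sup>2)"
    using K by (simp add: ennreal_mult''[symmetric] power_mult_distrib)
  finally have "(L2norm M (ind_op (\<Union>s\<in>S. cball s 1) (T g)))\<^sup>2 \<le> (\<epsilon> * sqrt K * L2norm M g)\<^sup>2"
    by simp
  then show ?thesis
    by (rule power2_le_imp_le) (use K \<epsilon> in \<open>simp add: L2norm_nonneg\<close>)
qed

lemma exists_eventual_set_opnorm_le:
  fixes M :: "'a::metric_space measure"
  assumes T: "bounded_op M T" and sM: "sets M = sets borel"
    and propagation: "\<forall>F G. closed F \<and> closed G \<and> setdist F G > r \<longrightarrow>
        (\<forall>f\<in>L2 M. AE x in M. ind_op F (T (ind_op G f)) x = 0)"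
    and r: "0 < r"
    and inf_pos: "0 < (INF x. emeasure M (cball x (1/2)))"
    and sup_fin: "\<And>\<rho>. 0 < \<rho> \<Longrightarrow> (SUP x. emeasure M (cball x \<rho>)) < \<infinity>"
    and lim: "((\<lambda>x. opnorm M (\<lambda>f. ind_op (cball x 1) (T f))) \<longlongrightarrow> 0) \<xi>"
    and \<delta>: "0 < \<delta>"
  obtains F where "F \<in> sets M" "eventually (\<lambda>x. x \<in> F) \<xi>" "opnorm M (\<lambda>f. ind_op F (T f)) \<le> \<delta>"
proof -
  have "(SUP x. emeasure M (cball x (r + 2 + 1/2))) < \<infinity>" using sup_fin r by simp
  then obtain K where multiplicity: "\<And>(S :: 'a set) y. pairwise (\<lambda>p q. 1 < dist p q) S \<Longrightarrow>
      finite (S \<inter> ball y (r + 2)) \<and> real (card (S \<inter> ball y (r + 2))) \<le> K"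
    using separated_Int_ball_card_le[OF sM inf_pos] by blast
  have K: "0 \<le> K" using multiplicity[of "{}" undefined] by simp
  define \<epsilon> where "\<epsilon> = \<delta> / (sqrt K + 1)"
  have pos: "0 < sqrt K + 1" using real_sqrt_ge_zero[OF K] by linarith
  have \<epsilon>: "0 < \<epsilon>" "\<epsilon> * sqrt K \<le> \<delta>"
  proof -
    show "0 < \<epsilon>" unfolding \<epsilon>_def using \<delta> pos by simp
    have "\<epsilon> * sqrt K \<le> \<epsilon> * (sqrt K + 1)" using \<open>0 < \<epsilon>\<close> by simp
    also have "\<dots> = \<delta>" unfolding \<epsilon>_def using pos by simp
    finally show "\<epsilon> * sqrt K \<le> \<delta>" .
  qed
  define A where "A = {x. opnorm M (\<lambda>f. ind_op (cball x 1) (T f)) < \<epsilon>}"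
  obtain S where SA: "S \<subseteq> A" and separated: "pairwise (\<lambda>p q. 1 < dist p q) S"
    and covering: "A \<subseteq> (\<Union>s\<in>S. cball s 1)"
    using maximal_separated_subset[of 1 A] by auto
  have S: "countable S" by (rule countable_separated[OF sM inf_pos sup_fin separated])
  have "(\<Union>s\<in>S. cball s 1) \<in> sets M" unfolding sM by (intro sets.countable_UN' S) auto
  moreover have "eventually (\<lambda>x. x \<in> (\<Union>s\<in>S. cball s 1)) \<xi>"
    using order_tendstoD(2)[OF lim \<epsilon>(1)]
    by (rule eventually_mono) (use covering in \<open>unfold A_def, blast\<close>)
  moreover have "opnorm M (\<lambda>f. ind_op (\<Union>s\<in>S. cball s 1) (T f)) \<le> \<delta>"
  proof (rule order_trans[OF _ \<epsilon>(2)], rule opnorm_ind_op_le)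
    fix g assume g: "g \<in> L2 M" "L2norm M g \<le> 1"
    have "L2norm M (ind_op (\<Union>s\<in>S. cball s 1) (T g)) \<le> \<epsilon> * sqrt K * L2norm M g"
      using SA \<epsilon>(1)
      by (intro L2norm_ind_op_UN_cball_T_le[OF T sM propagation _ S multiplicity[OF separated] _ _ g(1)])
         (auto simp: A_def)
    also have "\<dots> \<le> \<epsilon> * sqrt K"
      using g(2) \<epsilon>(1) K by (simp add: mult_left_le)
    finally show "L2norm M (ind_op (\<Union>s\<in>S. cball s 1) (T g)) \<le> \<epsilon> * sqrt K" .
  qed
  ultimately show ?thesis by (rule that)
qed

lemma J_idealI:
  assumes T: "T \<in> E_alg M"
    and small: "\<And>\<delta>. 0 < \<delta> \<Longrightarrow>
      \<exists>F\<in>sets M. eventually (\<lambda>x. x \<in> F) \<xi> \<and> opnorm M (\<lambda>f. ind_op F (T f)) \<le> \<delta>"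
  shows "T \<in> J_ideal M \<xi>"
proof -
  define \<F> where "\<F> = {F. F \<in> sets M \<and> eventually (\<lambda>x. x \<in> F) \<xi>}"
  have bounded: "bounded_op M T" using T by (simp add: E_alg_def)
  have nonneg: "0 \<le> opnorm M (\<lambda>f. ind_op F (T f))" if "F \<in> \<F>" for F
    using that by (intro opnorm_ind_op_nonneg bounded) (simp add: \<F>_def)
  have "\<F> \<noteq> {}" using small[of 1] by (auto simp: \<F>_def)
  then have INF_ge: "0 \<le> (INF F\<in>\<F>. opnorm M (\<lambda>f. ind_op F (T f)))"
    by (rule cINF_greatest) (rule nonneg)
  have INF_le: "(INF F\<in>\<F>. opnorm M (\<lambda>f. ind_op F (T f))) \<le> \<delta>" if \<delta>: "0 < \<delta>" for \<delta>
  proof -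
    obtain F where "F \<in> \<F>" "opnorm M (\<lambda>f. ind_op F (T f)) \<le> \<delta>"
      using small[OF \<delta>] by (auto simp: \<F>_def)
    then show ?thesis
      using nonneg by (intro cINF_lower2 bdd_belowI2[where m = 0]) auto
  qed
  have "(INF F\<in>\<F>. opnorm M (\<lambda>f. ind_op F (T f))) \<le> 0"
    by (rule field_le_epsilon) (simp add: INF_le)
  with INF_ge have "(INF F\<in>\<F>. opnorm M (\<lambda>f. ind_op F (T f))) = 0" by simp
  then show ?thesis using T by (simp add: J_ideal_def \<F>_def)
qed

theorem lemma5p4:
  fixes M :: "'a::heine_borel measure"
    and T :: "('a \<Rightarrow> complex) \<Rightarrow> ('a \<Rightarrow> complex)"
    and \<xi> :: "'a filter"
  assumes noncompact: "\<not> compact (UNIV :: 'a set)"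
    and radon: "radon_measure M"
    and supp: "full_support M"
    and balls_pos: "\<And>x r. r > 0 \<Longrightarrow> emeasure M (cball x r) > 0"
    and balls_unif: "\<And>r. r > 0 \<Longrightarrow> (SUP x. emeasure M (cball x r)) < \<infinity>"
    and inf_half: "(INF x. emeasure M (cball x (1/2))) > 0"
    and T_E: "T \<in> E_alg M"
    and T_ctrl: "controlled_op M T"
    and coarse: "coarse_filter \<xi>"
    and lim: "((\<lambda>x. opnorm M (\<lambda>f. ind_op (cball x 1) (T f))) \<longlongrightarrow> 0) \<xi>"
  shows "T \<in> J_ideal M \<xi>"
proof (rule J_idealI[OF T_E])
  fix \<delta> :: real assume "0 < \<delta>"
  have sM: "sets M = sets borel" using radon by (simp add: radon_measure_def)
  have T: "bounded_op M T" using T_E by (simp add: E_alg_def)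
  obtain r where "0 < r" and propagation: "\<forall>F G. closed F \<and> closed G \<and> setdist F G > r \<longrightarrow>
      (\<forall>f\<in>L2 M. AE x in M. ind_op F (T (ind_op G f)) x = 0)"
    using T_ctrl by (auto simp: controlled_op_def)
  obtain F where "F \<in> sets M" "eventually (\<lambda>x. x \<in> F) \<xi>" "opnorm M (\<lambda>f. ind_op F (T f)) \<le> \<delta>"
    by (rule exists_eventual_set_opnorm_le[OF T sM propagation \<open>0 < r\<close> inf_half balls_unif lim \<open>0 < \<delta>\<close>])
  then show "\<exists>F\<in>sets M. eventually (\<lambda>x. x \<in> F) \<xi> \<and> opnorm M (\<lambda>f. ind_op F (T f)) \<le> \<delta>"
    by blast
qed

end
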